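(* Let $F:\mathbb{R}^d\times\Xi\to\mathbb{R}$, let $\xi$ have law $P$ on $\Xi$, and let $f(\bm{x}):=\mathbb{E}[F(\bm{x},\xi)]$ be finite. Suppose there is a measurable $\kappa_{FL}:\Xi\to[0,\infty)$ with $|F(\bm{x}_1,\xi)-F(\bm{x}_2,\xi)|\le\kappa_{FL}(\xi)\|\bm{x}_1-\bm{x}_2\|$ for all $\bm{x}_1,\bm{x}_2,\xi$, and that $\kappa_{Lm}:=\sup_{m\ge2}\big(\mathbb{E}[\kappa_{FL}(\xi)^m]\big)^{1/m}<\infty$. Let $\mathcal{F}_k=\mathcal{F}_{k,0}\subseteq\mathcal{F}_{k,1}\subseteq\cdots$ be $\sigma$-algebras, let $\Delta_k>0$ and $\bm{X}^0_k,\bm{X}^i_k\in\mathbb{R}^d$ be $\mathcal{F}_k$-measurable with $\|\bm{X}^0_k-\bm{X}^i_k\|\le\Delta_k$ and $|f(\bm{X}^0_k)-f(\bm{X}^i_k)|\le\kappa_{Lg}\Delta_k$ for a constant $\kappa_{Lg}>0$. Let $(\xi_{k,j})_{j\ge1}$ be random elements with law $P$ such that $\xi_{k,j}$ is $\mathcal{F}_{k,j}$-measurable and independent of $\mathcal{F}_{k,j-1}$. Define $E^l_{j}:=F(\bm{X}^l_k,\xi_{k,j})-f(\bm{X}^l_k)$ for $l\in\{0,i\}$ and $D_j:=E^0_j-E^i_j$. Set $b_C=\sigma_C=\kappa_{Lg}+\kappa_{Lm}$. Then for every $c>0$ and $n\in\mathbb{N}$, $$\mathbb{P}\Big(\sum_{j=1}^n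 D_j\ge nc\ \Big|\ \mathcal{F}_k\Big)\le\exp\Big\{-\frac{nc^2}{2(\Delta_kb_Cc+\Delta_k^2\sigma_C^2)}\Big\}\quad\text{a.s.}$$
   Context: This is the common-random-numbers setting: both points $\bm{X}^0_k$ and $\bm{X}^i_k$ are evaluated with the same random element $\xi_{k,j}$ in the $j$-th observation. $\|\cdot\|$ is the Euclidean norm. *)

theory Defs
  imports "HOL-Probability.Probability"
begin

definition kappa_Lm :: "'b measure \<Rightarrow> ('b \<Rightarrow> real) \<Rightarrow> real" where
  "kappa_Lm P \<kappa> = (SUP m\<in>{2::nat..}. (\<integral>s. \<kappa> s ^ m \<partial>P) powr (1 / real m))"

end

theory Submission
  imports Defs
begin

text \<open>Given \<open>\<F>\<^sub>k\<close>, each increment \<open>D\<^sub>j\<close> is centred and dominated by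
  \<open>\<Delta>\<^sub>k (\<kappa>\<^sub>F\<^sub>L(\<xi>) + \<kappa>\<^sub>L\<^sub>g)\<close>, whose \<open>m\<close>-th moment is at most \<open>(\<Delta>\<^sub>k \<sigma>\<^sub>C)\<^sup>m\<close>; expanding the exponential gives
  the Bernstein bound \<open>E exp (\<theta> D\<^sub>j) \<le> exp (a\<^sup>2 / (2 (1 - a)))\<close> for \<open>a = \<theta> \<Delta>\<^sub>k \<sigma>\<^sub>C < 1\<close>. Since
  \<open>\<xi>\<^sub>k\<^sub>,\<^sub>j\<close> is independent of \<open>\<F>\<^sub>k\<^sub>,\<^sub>j\<^sub>-\<^sub>1\<close>, integrating it out with the \<open>\<F>\<^sub>k\<^sub>,\<^sub>j\<^sub>-\<^sub>1\<close>-measurable data frozen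
  shows that \<open>exp (\<theta> S\<^sub>j - j \<psi>)\<close> is a supermartingale. Markov's inequality on every event of
  \<open>\<F>\<^sub>k\<close>, with the choice \<open>a = c / (\<Delta>\<^sub>k \<sigma>\<^sub>C + c)\<close>, then bounds the conditional probability.\<close>

section \<open>Moments of the Lipschitz modulus\<close>

lemma kappa_Lm_nonneg:
  assumes "bdd_above ((\<lambda>m::nat. (\<integral>s. \<kappa> s ^ m \<partial>P) powr (1 / real m)) ` {2..})"
  shows "0 \<le> kappa_Lm P \<kappa>"
proof -
  have "(\<integral>s. \<kappa> s ^ 2 \<partial>P) powr (1 / real 2) \<le> kappa_Lm P \<kappa>"
    unfolding kappa_Lm_def using assms by (intro cSUP_upper) auto
  moreover have "0 \<le> (\<integral>s. \<kappa> s ^ 2 \<partial>P) powr (1 / real 2)"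
    by (rule powr_ge_zero)
  ultimately show ?thesis by linarith
qed

lemma (in prob_space) integrable_power_if_integrable_powers_ge_2:
  fixes \<kappa> :: "'a \<Rightarrow> real"
  assumes "\<kappa> \<in> borel_measurable M" "\<And>m. m \<ge> 2 \<Longrightarrow> integrable M (\<lambda>s. \<kappa> s ^ m)"
  shows "integrable M (\<lambda>s. \<kappa> s ^ m)"
proof -
  have "integrable M \<kappa>"
    using square_integrable_imp_integrable[OF assms(1) assms(2)] by simp
  then show ?thesis
  proof (cases "m \<ge> 2")
    case False
    then have "m = 0 \<or> m = 1" by auto
    then show ?thesis using \<open>integrable M \<kappa>\<close> by auto
  qed (rule assms(2))
qed

lemma (in prob_space) integral_power_le_kappa_Lm:
  fixes \<kappa> :: "'a \<Rightarrow> real"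
  assumes "\<kappa> \<in> borel_measurable M" "\<And>s. s \<in> space M \<Longrightarrow> 0 \<le> \<kappa> s"
    and "\<And>m. m \<ge> 2 \<Longrightarrow> integrable M (\<lambda>s. \<kappa> s ^ m)"
    and bdd: "bdd_above ((\<lambda>m::nat. (\<integral>s. \<kappa> s ^ m \<partial>M) powr (1 / real m)) ` {2..})"
  shows "(\<integral>s. \<kappa> s ^ m \<partial>M) \<le> kappa_Lm M \<kappa> ^ m"
proof -
  let ?K = "kappa_Lm M \<kappa>"
  have high: "(\<integral>s. \<kappa> s ^ m \<partial>M) \<le> ?K ^ m" if "m \<ge> 2" for m
  proof -
    have "(\<integral>s. \<kappa> s ^ m \<partial>M) \<ge> 0"
      using assms(2) by (intro integral_nonneg_AE) auto
    then have "(\<integral>s. \<kappa> s ^ m \<partial>M) = ((\<integral>s. \<kappa> s ^ m \<partial>M) powr (1 / real m)) ^ m"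
      using that by (simp add: powr_realpow'[symmetric] powr_powr)
    also have "\<dots> \<le> ?K ^ m"
      unfolding kappa_Lm_def using bdd that by (intro power_mono cSUP_upper) auto
    finally show ?thesis .
  qed
  consider "m = 0" | "m = 1" | "m \<ge> 2" by linarith
  then show ?thesis
  proof cases
    case 1
    then show ?thesis by (simp add: prob_space)
  next
    case 2
    have "integrable M \<kappa>" "integrable M (\<lambda>s. \<kappa> s ^ 2)"
      using integrable_power_if_integrable_powers_ge_2[OF assms(1,3), of 1] assms(3)[of 2] by auto
    from variance_eq[OF this] variance_positive[of \<kappa>]
    have "(\<integral>s. \<kappa> s \<partial>M)\<^sup>2 \<le> ?K ^ 2"
      using high[of 2] by linarith
    then have "(\<integral>s. \<kappa> s \<partial>M) \<le> ?K"
      using kappa_Lm_nonneg[OF bdd] by (rule power2_le_imp_le)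
    with 2 show ?thesis
      by simp
  next
    case 3
    then show ?thesis by (rule high)
  qed
qed

lemma (in prob_space) moments_add_const_le:
  fixes \<kappa> :: "'a \<Rightarrow> real"
  assumes int: "\<And>k. integrable M (\<lambda>s. \<kappa> s ^ k)" and le: "\<And>k. expectation (\<lambda>s. \<kappa> s ^ k) \<le> K ^ k"
    and "0 \<le> L"
  shows "integrable M (\<lambda>s. (\<kappa> s + L) ^ m)" "expectation (\<lambda>s. (\<kappa> s + L) ^ m) \<le> (K + L) ^ m"
proof -
  have binomial: "(\<kappa> s + L) ^ m = (\<Sum>k\<le>m. real (m choose k) * L ^ (m - k) * \<kappa> s ^ k)" for s
    unfolding binomial_ring by (intro sum.cong) auto
  show "integrable M (\<lambda>s. (\<kappa> s + L) ^ m)"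
    unfolding binomial by (intro Bochner_Integration.integrable_sum integrable_mult_right int)
  have "expectation (\<lambda>s. (\<kappa> s + L) ^ m)
      = (\<Sum>k\<le>m. real (m choose k) * L ^ (m - k) * expectation (\<lambda>s. \<kappa> s ^ k))"
    unfolding binomial by (subst Bochner_Integration.integral_sum) (auto intro: int)
  also have "\<dots> \<le> (\<Sum>k\<le>m. real (m choose k) * L ^ (m - k) * K ^ k)"
    using le \<open>0 \<le> L\<close> by (intro sum_mono mult_left_mono) auto
  also have "\<dots> = (K + L) ^ m"
    unfolding binomial_ring by (intro sum.cong) auto
  finally show "expectation (\<lambda>s. (\<kappa> s + L) ^ m) \<le> (K + L) ^ m" .
qed

section \<open>Bernstein's inequality for the moment generating function\<close>

lemma exp_minus_one_minus_sums: "(\<lambda>n. y ^ (n + 2) / fact (n + 2)) sums (exp y - 1 - (y::real))"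
proof -
  have "(\<lambda>n. y ^ n / fact n) sums exp y"
    using exp_converges[of y] by (simp add: divide_inverse mult.commute)
  from sums_split_initial_segment[OF this, of 2] show ?thesis
    by (simp add: numeral_2_eq_2 diff_diff_eq)
qed

lemma exp_minus_one_minus_le_abs:
  assumes "\<bar>x\<bar> \<le> (y::real)"
  shows "exp x - 1 - x \<le> exp y - 1 - y"
proof (rule sums_le[OF _ exp_minus_one_minus_sums exp_minus_one_minus_sums])
  fix n
  have "x ^ (n + 2) \<le> \<bar>x\<bar> ^ (n + 2)"
    by (metis abs_ge_self power_abs)
  also have "\<dots> \<le> y ^ (n + 2)"
    using assms by (intro power_mono) auto
  finally show "x ^ (n + 2) / fact (n + 2) \<le> y ^ (n + 2) / fact (n + 2)"
    by (intro divide_right_mono) auto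
qed

lemma exp_minus_one_minus_le_geometric:
  assumes "0 \<le> a" "a < (1::real)"
  shows "exp a - 1 - a \<le> a\<^sup>2 / (2 * (1 - a))"
proof -
  have geometric: "(\<lambda>n. a\<^sup>2 / 2 * a ^ n) sums (a\<^sup>2 / 2 * (1 / (1 - a)))"
    using assms by (intro sums_mult geometric_sums) auto
  have "exp a - 1 - a \<le> a\<^sup>2 / 2 * (1 / (1 - a))"
  proof (rule sums_le[OF _ exp_minus_one_minus_sums geometric])
    fix n
    have "(2::real) \<le> fact (n + 2)"
      using fact_mono[of 2 "n + 2", where 'a=real] by simp
    then have "a ^ (n + 2) / fact (n + 2) \<le> a ^ (n + 2) / 2"
      using assms by (intro divide_left_mono) auto
    then show "a ^ (n + 2) / fact (n + 2) \<le> a\<^sup>2 / 2 * a ^ n"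
      by (simp add: power_add power2_eq_square)
  qed
  then show ?thesis
    by simp
qed

lemma Bernstein_exponent:
  fixes x c :: real
  assumes "0 < x" "0 < c"
  defines "a \<equiv> c / (x + c)"
  shows "real n * (a\<^sup>2 / (2 * (1 - a))) - a / x * (real n * c) = - (real n * c\<^sup>2) / (2 * (x * c + x\<^sup>2))"
proof -
  define q where "q = x * (x + c)"
  have "x + c \<noteq> 0" "q \<noteq> 0"
    using assms by (auto simp: q_def)
  have "1 - a = x / (x + c)"
    using \<open>x + c \<noteq> 0\<close> by (simp add: a_def field_simps)
  then have \<psi>: "a\<^sup>2 / (2 * (1 - a)) = c\<^sup>2 / (2 * q)"
    using \<open>x + c \<noteq> 0\<close> by (simp add: a_def q_def power2_eq_square)
  have \<theta>: "a / x = c / q"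
    by (simp add: a_def q_def)
  have "real n * (a\<^sup>2 / (2 * (1 - a))) - a / x * (real n * c) = real n * (c\<^sup>2 / (2 * q)) - c / q * (real n * c)"
    by (simp only: \<psi> \<theta>)
  also have "\<dots> = - (real n * c\<^sup>2) / (2 * q)"
    using \<open>q \<noteq> 0\<close> by (simp add: field_simps power2_eq_square)
  also have "q = x * c + x\<^sup>2"
    by (simp add: q_def power2_eq_square algebra_simps)
  finally show ?thesis .
qed

lemma (in prob_space) nn_integral_exp_minus_one_minus_le:
  fixes Y :: "'a \<Rightarrow> real"
  assumes Y: "Y \<in> borel_measurable M" "\<And>s. s \<in> space M \<Longrightarrow> 0 \<le> Y s"
    and moments: "\<And>m. m \<ge> 2 \<Longrightarrow> integrable M (\<lambda>s. Y s ^ m)"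
      "\<And>m. m \<ge> 2 \<Longrightarrow> expectation (\<lambda>s. Y s ^ m) \<le> a ^ m"
    and "0 \<le> a"
  shows "(\<integral>\<^sup>+s. ennreal (exp (Y s) - 1 - Y s) \<partial>M) \<le> ennreal (exp a - 1 - a)"
proof -
  note [measurable] = Y(1)
  have "(\<integral>\<^sup>+s. ennreal (exp (Y s) - 1 - Y s) \<partial>M)
      = (\<integral>\<^sup>+s. (\<Sum>n. ennreal (Y s ^ (n + 2) / fact (n + 2))) \<partial>M)"
    using Y(2) exp_minus_one_minus_sums
    by (intro nn_integral_cong suminf_ennreal_eq[symmetric]) auto
  also have "\<dots> = (\<Sum>n. (\<integral>\<^sup>+s. ennreal (Y s ^ (n + 2) / fact (n + 2)) \<partial>M))"
    by (intro nn_integral_suminf) measurable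
  also have "\<dots> \<le> (\<Sum>n. ennreal (a ^ (n + 2) / fact (n + 2)))"
  proof (intro suminf_le summableI)
    fix n
    have "(\<integral>\<^sup>+s. ennreal (Y s ^ (n + 2) / fact (n + 2)) \<partial>M)
        = ennreal (expectation (\<lambda>s. Y s ^ (n + 2)) / fact (n + 2))"
      using moments(1)[of "n + 2"] Y(2) by (subst nn_integral_eq_integral) auto
    also have "\<dots> \<le> ennreal (a ^ (n + 2) / fact (n + 2))"
      using moments(2)[of "n + 2"] by (intro ennreal_leI divide_right_mono) auto
    finally show "(\<integral>\<^sup>+s. ennreal (Y s ^ (n + 2) / fact (n + 2)) \<partial>M)
        \<le> ennreal (a ^ (n + 2) / fact (n + 2))" .
  qed
  also have "\<dots> = ennreal (exp a - 1 - a)"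
    using \<open>0 \<le> a\<close> exp_minus_one_minus_sums by (intro suminf_ennreal_eq) auto
  finally show ?thesis .
qed

lemma (in prob_space) nn_integral_exp_le_Bernstein:
  fixes G Y :: "'a \<Rightarrow> real"
  assumes G: "integrable M G" "expectation G = 0"
    and Y: "Y \<in> borel_measurable M" "\<And>s. s \<in> space M \<Longrightarrow> \<bar>G s\<bar> \<le> Y s"
    and moments: "\<And>m. m \<ge> 2 \<Longrightarrow> integrable M (\<lambda>s. Y s ^ m)"
      "\<And>m. m \<ge> 2 \<Longrightarrow> expectation (\<lambda>s. Y s ^ m) \<le> a ^ m"
    and a: "0 \<le> a" "a < 1"
  shows "(\<integral>\<^sup>+s. ennreal (exp (G s)) \<partial>M) \<le> ennreal (exp (a\<^sup>2 / (2 * (1 - a))))"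
proof -
  define T where "T s = exp (Y s) - 1 - Y s" for s
  have T_nonneg: "0 \<le> T s" if "s \<in> space M" for s
    using exp_minus_one_minus_le_abs[of 0 "Y s"] Y(2)[OF that] by (simp add: T_def)
  have T_le: "(\<integral>\<^sup>+s. ennreal (T s) \<partial>M) \<le> ennreal (exp a - 1 - a)"
    unfolding T_def using Y moments a(1) abs_ge_zero order_trans
    by (intro nn_integral_exp_minus_one_minus_le) blast+
  have T_int: "integrable M T"
    using Y(1) T_nonneg T_le unfolding T_def
    by (intro integrableI_nonneg) (auto simp: top.not_eq_extremum intro: le_less_trans)
  have "ennreal (expectation T) \<le> ennreal (exp a - 1 - a)"
    using T_le T_int T_nonneg by (simp add: nn_integral_eq_integral)
  then have "expectation T \<le> exp a - 1 - a"
    using exp_ge_add_one_self[of a] by (simp add: ennreal_le_iff)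
  also have "\<dots> \<le> a\<^sup>2 / (2 * (1 - a))"
    using a by (rule exp_minus_one_minus_le_geometric)
  finally have ET: "expectation T \<le> a\<^sup>2 / (2 * (1 - a))" .
  have pointwise: "exp (G s) \<le> 1 + G s + T s" if "s \<in> space M" for s
    using exp_minus_one_minus_le_abs[OF Y(2)[OF that]] by (simp add: T_def)
  have "(\<integral>\<^sup>+s. ennreal (exp (G s)) \<partial>M) \<le> (\<integral>\<^sup>+s. ennreal (1 + G s + T s) \<partial>M)"
    using pointwise by (intro nn_integral_mono ennreal_leI) auto
  also have "\<dots> = ennreal (1 + expectation T)"
    using G T_int pointwise order_trans[OF less_imp_le[OF exp_gt_zero]]
    by (subst nn_integral_eq_integral) (auto simp: prob_space)
  also have "\<dots> \<le> ennreal (exp (a\<^sup>2 / (2 * (1 - a))))"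
    using ET exp_ge_add_one_self[of "a\<^sup>2 / (2 * (1 - a))"] by (intro ennreal_leI) linarith
  finally show ?thesis .
qed

lemma (in prob_space) nn_integral_exp_Lipschitz_diff_le:
  fixes F :: "'x::real_normed_vector \<Rightarrow> 'a \<Rightarrow> real"
  assumes F_int: "\<And>x. integrable M (F x)"
    and \<kappa>_nonneg: "\<And>s. s \<in> space M \<Longrightarrow> 0 \<le> \<kappa> s"
    and Lip: "\<And>x1 x2 s. s \<in> space M \<Longrightarrow> \<bar>F x1 s - F x2 s\<bar> \<le> \<kappa> s * norm (x1 - x2)"
    and \<kappa>_int: "\<And>k. integrable M (\<lambda>s. \<kappa> s ^ k)" and \<kappa>_le: "\<And>k. expectation (\<lambda>s. \<kappa> s ^ k) \<le> K ^ k"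
    and "0 \<le> L" "0 \<le> l" and dist: "norm (x0 - x1) \<le> \<Delta>"
    and mean_diff: "\<bar>expectation (F x0) - expectation (F x1)\<bar> \<le> L * \<Delta>"
    and a: "a = l * \<Delta> * (L + K)" "a < 1"
  shows "(\<integral>\<^sup>+s. ennreal (exp (l * ((F x0 s - expectation (F x0)) - (F x1 s - expectation (F x1))))) \<partial>M)
    \<le> ennreal (exp (a\<^sup>2 / (2 * (1 - a))))"
proof (rule nn_integral_exp_le_Bernstein)
  define t where "t = l * \<Delta>"
  have "0 \<le> \<Delta>"
    using dist norm_ge_zero[of "x0 - x1"] by linarith
  then have "0 \<le> t"
    using \<open>0 \<le> l\<close> unfolding t_def by simp
  have "0 \<le> expectation \<kappa>"
    using \<kappa>_nonneg by (intro integral_nonneg_AE) auto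
  then have "0 \<le> K"
    using \<kappa>_le[of 1] by simp
  show "integrable M (\<lambda>s. l * ((F x0 s - expectation (F x0)) - (F x1 s - expectation (F x1))))"
    using F_int by auto
  show "expectation (\<lambda>s. l * ((F x0 s - expectation (F x0)) - (F x1 s - expectation (F x1)))) = 0"
    using F_int by (simp add: prob_space)
  show "(\<lambda>s. t * (\<kappa> s + L)) \<in> borel_measurable M"
    using \<kappa>_int[of 1] by auto
  show "\<bar>l * ((F x0 s - expectation (F x0)) - (F x1 s - expectation (F x1)))\<bar> \<le> t * (\<kappa> s + L)"
    if "s \<in> space M" for s
  proof -
    have "\<bar>F x0 s - F x1 s\<bar> \<le> \<kappa> s * \<Delta>"
      using Lip[OF that, of x0 x1] dist \<kappa>_nonneg[OF that] by (meson mult_left_mono order_trans)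
    then have "\<bar>(F x0 s - expectation (F x0)) - (F x1 s - expectation (F x1))\<bar> \<le> \<Delta> * (\<kappa> s + L)"
      using mean_diff by (simp add: algebra_simps)
    then show ?thesis
      using \<open>0 \<le> l\<close> by (auto simp: t_def abs_mult mult.assoc intro: mult_left_mono)
  qed
  show "integrable M (\<lambda>s. (t * (\<kappa> s + L)) ^ m)" for m
    unfolding power_mult_distrib using moments_add_const_le(1)[OF \<kappa>_int \<kappa>_le \<open>0 \<le> L\<close>] by auto
  show "expectation (\<lambda>s. (t * (\<kappa> s + L)) ^ m) \<le> a ^ m" for m
    unfolding power_mult_distrib a(1) t_def[symmetric]
    using moments_add_const_le(2)[OF \<kappa>_int \<kappa>_le \<open>0 \<le> L\<close>] \<open>0 \<le> t\<close>
    by (auto simp: add.commute intro: mult_left_mono)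
  show "0 \<le> a" "a < 1"
    using \<open>0 \<le> t\<close> \<open>0 \<le> K\<close> \<open>0 \<le> L\<close> a unfolding t_def by simp_all
qed

section \<open>Measurability of Lipschitz parametrised integrands\<close>

lemma Lipschitz_eq_INF_dense:
  fixes g :: "'x::real_normed_vector \<Rightarrow> real"
  assumes Lip: "\<And>x y. \<bar>g x - g y\<bar> \<le> k * norm (x - y)" and "0 \<le> k"
    and dense: "\<And>X. open X \<Longrightarrow> X \<noteq> {} \<Longrightarrow> \<exists>d\<in>D. d \<in> X"
  shows "g x = (INF r\<in>D. g r + k * norm (x - r))"
proof (rule antisym)
  have upper: "g x \<le> g r + k * norm (x - r)" for r
    using Lip[of x r] by linarith
  have "D \<noteq> {}"
    using dense[of UNIV] by auto
  then show "g x \<le> (INF r\<in>D. g r + k * norm (x - r))"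
    using upper by (intro cINF_greatest) auto
  show "(INF r\<in>D. g r + k * norm (x - r)) \<le> g x"
  proof (rule field_le_epsilon)
    fix e :: real
    assume "0 < e"
    then have "0 < e / (2 * (k + 1))"
      using \<open>0 \<le> k\<close> by simp
    then obtain r where r: "r \<in> D" "norm (x - r) < e / (2 * (k + 1))"
      using dense[of "ball x (e / (2 * (k + 1)))"] by (auto simp: dist_norm)
    have "(INF r\<in>D. g r + k * norm (x - r)) \<le> g r + k * norm (x - r)"
      using upper r(1) by (intro cINF_lower bdd_belowI2)
    also have "\<dots> \<le> g x + 2 * k * norm (x - r)"
      using Lip[of r x] by (simp add: norm_minus_commute)
    also have "\<dots> \<le> g x + 2 * k * (e / (2 * (k + 1)))"
      using r(2) \<open>0 \<le> k\<close> by (intro add_left_mono mult_left_mono) auto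
    also have "\<dots> \<le> g x + e"
      using \<open>0 < e\<close> \<open>0 \<le> k\<close> by (simp add: field_simps)
    finally show "(INF r\<in>D. g r + k * norm (x - r)) \<le> g x + e" .
  qed
qed

text \<open>A Caratheodory-type measurability result: separability of the parameter space
  lets the Lipschitz function be recovered from its values on a countable dense set.\<close>
lemma borel_measurable_Lipschitz_param:
  fixes F :: "'x::{real_normed_vector, second_countable_topology} \<Rightarrow> 'b \<Rightarrow> real"
  assumes F: "\<And>x. F x \<in> borel_measurable P" and \<kappa>: "\<kappa> \<in> borel_measurable P"
    and \<kappa>_nonneg: "\<And>s. s \<in> space P \<Longrightarrow> 0 \<le> \<kappa> s"
    and Lip: "\<And>x1 x2 s. s \<in> space P \<Longrightarrow> \<bar>F x1 s - F x2 s\<bar> \<le> \<kappa> s * norm (x1 - x2)"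
    and Y: "Y \<in> borel_measurable N" and Z: "Z \<in> measurable N P"
  shows "(\<lambda>\<omega>. F (Y \<omega>) (Z \<omega>)) \<in> borel_measurable N"
proof -
  obtain D :: "'x set" where "countable D" and dense: "\<And>X. open X \<Longrightarrow> X \<noteq> {} \<Longrightarrow> \<exists>d\<in>D. d \<in> X"
    using countable_dense_setE by blast
  have "(\<lambda>\<omega>. INF r\<in>D. F r (Z \<omega>) + \<kappa> (Z \<omega>) * norm (Y \<omega> - r)) \<in> borel_measurable N"
    using \<open>countable D\<close> F \<kappa> Y Z by measurable
  moreover have "F (Y \<omega>) (Z \<omega>) = (INF r\<in>D. F r (Z \<omega>) + \<kappa> (Z \<omega>) * norm (Y \<omega> - r))"
    if "\<omega> \<in> space N" for \<omega>
    using measurable_space[OF Z that] by (intro Lipschitz_eq_INF_dense Lip \<kappa>_nonneg dense)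
  ultimately show ?thesis
    by (simp cong: measurable_cong)
qed

lemma borel_measurable_integral_Lipschitz_param:
  fixes F :: "'x::{real_normed_vector, second_countable_topology} \<Rightarrow> 'b \<Rightarrow> real"
  assumes P: "sigma_finite_measure P"
    and F: "\<And>x. F x \<in> borel_measurable P" and \<kappa>: "\<kappa> \<in> borel_measurable P"
    and \<kappa>_nonneg: "\<And>s. s \<in> space P \<Longrightarrow> 0 \<le> \<kappa> s"
    and Lip: "\<And>x1 x2 s. s \<in> space P \<Longrightarrow> \<bar>F x1 s - F x2 s\<bar> \<le> \<kappa> s * norm (x1 - x2)"
    and Y: "Y \<in> borel_measurable N"
  shows "(\<lambda>\<omega>. \<integral>s. F (Y \<omega>) s \<partial>P) \<in> borel_measurable N"
proof -
  have "(\<lambda>p. F (Y (fst p)) (snd p)) \<in> borel_measurable (N \<Otimes>\<^sub>M P)"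
    using Y by (intro borel_measurable_Lipschitz_param[OF F \<kappa> \<kappa>_nonneg Lip]) auto
  then show ?thesis
    using sigma_finite_measure.borel_measurable_lebesgue_integral[OF P] by (simp add: case_prod_unfold)
qed

lemma borel_measurable_centred_diff_Lipschitz_param:
  fixes F :: "'x::{real_normed_vector, second_countable_topology} \<Rightarrow> 'b \<Rightarrow> real"
  assumes P: "sigma_finite_measure P"
    and F: "\<And>x. F x \<in> borel_measurable P" and \<kappa>: "\<kappa> \<in> borel_measurable P"
    and \<kappa>_nonneg: "\<And>s. s \<in> space P \<Longrightarrow> 0 \<le> \<kappa> s"
    and Lip: "\<And>x1 x2 s. s \<in> space P \<Longrightarrow> \<bar>F x1 s - F x2 s\<bar> \<le> \<kappa> s * norm (x1 - x2)"
    and X: "X \<in> borel_measurable N" and Y: "Y \<in> borel_measurable N"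
  shows "(\<lambda>(\<omega>, s). (F (X \<omega>) s - (\<integral>t. F (X \<omega>) t \<partial>P)) - (F (Y \<omega>) s - (\<integral>t. F (Y \<omega>) t \<partial>P)))
    \<in> borel_measurable (N \<Otimes>\<^sub>M P)"
proof -
  have [measurable]: "(\<lambda>\<omega>. \<integral>t. F (Z \<omega>) t \<partial>P) \<in> borel_measurable N"
    "(\<lambda>p. F (Z (fst p)) (snd p)) \<in> borel_measurable (N \<Otimes>\<^sub>M P)"
    if "Z \<in> borel_measurable N" for Z
    using borel_measurable_integral_Lipschitz_param[OF P F \<kappa> \<kappa>_nonneg Lip that]
      borel_measurable_Lipschitz_param[OF F \<kappa> \<kappa>_nonneg Lip measurable_compose[OF measurable_fst that]
        measurable_snd]
    by auto
  show ?thesis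
    using X Y by measurable
qed

section \<open>Independence and conditional expectation\<close>

lemma nn_integral_indep_freeze:
  assumes M: "prob_space M" and P: "prob_space P" and sub: "subalgebra M G"
    and \<xi>: "\<xi> \<in> measurable M P" and law: "distr M P \<xi> = P"
    and indep: "prob_space.indep_set M (sets G) {\<xi> -` A \<inter> space M | A. A \<in> sets P}"
    and h: "h \<in> borel_measurable (G \<Otimes>\<^sub>M P)"
  shows "(\<integral>\<^sup>+\<omega>. h (\<omega>, \<xi> \<omega>) \<partial>M) = (\<integral>\<^sup>+\<omega>. (\<integral>\<^sup>+s. h (\<omega>, s) \<partial>P) \<partial>M)"
proof -
  interpret prob_space M by (rule M)
  interpret P: prob_space P by (rule P)
  have space_G: "space G = space M" and sets_G: "sets G \<subseteq> sets M"
    using sub by (auto simp: subalgebra_def)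
  have id_G: "(\<lambda>x. x) \<in> measurable M G"
    using space_G sets_G by (intro measurableI) auto
  have pair: "(\<lambda>x. (x, \<xi> x)) \<in> measurable M (G \<Otimes>\<^sub>M P)"
    using id_G \<xi> by (rule measurable_Pair)
  have "prob_space (distr M G id)"
    using id_G by (intro prob_space_distr) (simp add: id_def)
  have joint: "distr M G id \<Otimes>\<^sub>M P = distr M (G \<Otimes>\<^sub>M P) (\<lambda>x. (x, \<xi> x))"
  proof (rule pair_measure_eqI)
    show "sigma_finite_measure (distr M G id)" "sigma_finite_measure P"
      using \<open>prob_space (distr M G id)\<close> P by (auto intro: prob_space_imp_sigma_finite)
    show "sets (distr M G id \<Otimes>\<^sub>M P) = sets (distr M (G \<Otimes>\<^sub>M P) (\<lambda>x. (x, \<xi> x)))"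
      unfolding sets_distr by (rule sets_pair_measure_cong) simp_all
    fix A B
    assume A: "A \<in> sets (distr M G id)" and B: "B \<in> sets P"
    then have "A \<in> sets G" "A \<subseteq> space M" "A \<in> sets M" "\<xi> -` B \<inter> space M \<in> sets M"
      using sets_G space_G sets.sets_into_space[of A G] \<xi> by auto
    moreover have "prob (A \<inter> (\<xi> -` B \<inter> space M)) = prob A * prob (\<xi> -` B \<inter> space M)"
      using indep \<open>A \<in> sets G\<close> B unfolding indep_sets2_eq by blast
    moreover have "emeasure P B = emeasure M (\<xi> -` B \<inter> space M)"
      using law \<xi> B by (metis emeasure_distr)
    moreover have "(\<lambda>x. (x, \<xi> x)) -` (A \<times> B) \<inter> space M = A \<inter> (\<xi> -` B \<inter> space M)"
      using \<open>A \<subseteq> space M\<close> by auto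
    ultimately show "emeasure (distr M G id) A * emeasure P B
        = emeasure (distr M (G \<Otimes>\<^sub>M P) (\<lambda>x. (x, \<xi> x))) (A \<times> B)"
      using id_G pair B
      by (simp add: emeasure_distr emeasure_eq_measure ennreal_mult Int_absorb2 space_G id_def)
  qed
  have "(\<integral>\<^sup>+\<omega>. h (\<omega>, \<xi> \<omega>) \<partial>M) = integral\<^sup>N (distr M (G \<Otimes>\<^sub>M P) (\<lambda>x. (x, \<xi> x))) h"
    using pair h by (subst nn_integral_distr) auto
  also have "\<dots> = (\<integral>\<^sup>+\<omega>. \<integral>\<^sup>+s. h (\<omega>, s) \<partial>P \<partial>distr M G id)"
    unfolding joint[symmetric] using h by (subst P.nn_integral_fst[symmetric]) (auto simp: id_def)
  also have "\<dots> = (\<integral>\<^sup>+\<omega>. (\<integral>\<^sup>+s. h (\<omega>, s) \<partial>P) \<partial>M)"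
    using id_G P.borel_measurable_nn_integral_fst[OF h] by (subst nn_integral_distr) (auto simp: id_def)
  finally show ?thesis .
qed

lemma (in sigma_finite_subalgebra) AE_real_cond_exp_indicator_le:
  assumes A: "A \<in> sets M" "emeasure M A < \<infinity>"
    and g: "g \<in> borel_measurable F" "integrable M g"
    and le: "\<And>B. B \<in> sets F \<Longrightarrow> measure M (A \<inter> B) \<le> (\<integral>\<omega>. indicator B \<omega> * g \<omega> \<partial>M)"
  shows "AE \<omega> in M. real_cond_exp M F (indicator A) \<omega> \<le> g \<omega>"
proof -
  define h where "h = real_cond_exp M F (indicator A)"
  have A_int: "integrable M (indicator A :: 'a \<Rightarrow> real)"
    using A by (intro integrable_real_indicator)
  have h: "h \<in> borel_measurable F" "integrable M h"
    unfolding h_def using A_int by (auto intro: real_cond_exp_int)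
  define B where "B = {\<omega> \<in> space M. g \<omega> < h \<omega>}"
  have "B = {\<omega> \<in> space F. g \<omega> < h \<omega>}"
    using subalg by (simp add: B_def subalgebra_def)
  also have "\<dots> \<in> sets F"
    using g h by measurable
  finally have B: "B \<in> sets F" "B \<in> sets M"
    using subalg unfolding subalgebra_def by blast+
  have gB: "integrable M (\<lambda>\<omega>. indicator B \<omega> * g \<omega>)"
    using integrable_mult_indicator[OF B(2) g(2)] by simp
  have hB: "integrable M (\<lambda>\<omega>. indicator B \<omega> * h \<omega>)"
    using integrable_mult_indicator[OF B(2) h(2)] by simp
  have "(\<integral>\<omega>. indicator B \<omega> * h \<omega> \<partial>M) = (\<integral>\<omega>\<in>B. h \<omega> \<partial>M)"
    by (simp add: set_lebesgue_integral_def)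
  also have "\<dots> = (\<integral>\<omega>\<in>B. indicator A \<omega> \<partial>M)"
    unfolding h_def by (rule real_cond_exp_intA[OF A_int B(1), symmetric])
  also have "\<dots> = (\<integral>\<omega>. indicator (A \<inter> B) \<omega> \<partial>M)"
    by (simp add: set_lebesgue_integral_def indicator_inter_arith ac_simps)
  also have "\<dots> = measure M (A \<inter> B)"
    using A(1) B(2) by (simp add: sets.Int_space_eq2 sets.Int)
  finally have "(\<integral>\<omega>. indicator B \<omega> * (h \<omega> - g \<omega>) \<partial>M) \<le> 0"
    using le[OF B(1)] by (simp add: right_diff_distrib Bochner_Integration.integral_diff[OF hB gB])
  moreover have nonneg: "0 \<le> indicator B \<omega> * (h \<omega> - g \<omega>)" for \<omega>
    by (simp add: B_def indicator_def)
  ultimately have "(\<integral>\<omega>. indicator B \<omega> * (h \<omega> - g \<omega>) \<partial>M) = 0"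
    by (intro antisym integral_nonneg_AE) auto
  moreover have "integrable M (\<lambda>\<omega>. indicator B \<omega> * (h \<omega> - g \<omega>))"
    using hB gB by (simp add: right_diff_distrib)
  ultimately have "AE \<omega> in M. indicator B \<omega> * (h \<omega> - g \<omega>) = 0"
    using integral_nonneg_eq_0_iff_AE nonneg by blast
  with AE_space show ?thesis
    unfolding h_def[symmetric] by eventually_elim (auto simp: B_def indicator_def split: if_splits)
qed

section \<open>Sampling along a filtration\<close>

text \<open>The outer index \<open>k\<close> is fixed: \<open>\<F> j\<close> stands for \<open>\<F>\<^sub>k\<^sub>,\<^sub>j\<close>, so \<open>\<F> 0 = \<F>\<^sub>k\<close>.\<close>
locale sampling_filtration = prob_space M + P: prob_space P
  for M :: "'a measure" and P :: "'b measure" and \<F> :: "nat \<Rightarrow> 'a measure" and \<xi> :: "nat \<Rightarrow> 'a \<Rightarrow> 'b" +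
  assumes subalgebra_\<F>: "\<And>j. subalgebra M (\<F> j)"
    and sets_\<F>_Suc: "\<And>j. sets (\<F> j) \<subseteq> sets (\<F> (Suc j))"
    and measurable_\<xi>: "\<And>j. j \<ge> 1 \<Longrightarrow> \<xi> j \<in> measurable (\<F> j) P"
    and distr_\<xi>: "\<And>j. j \<ge> 1 \<Longrightarrow> distr M P (\<xi> j) = P"
    and indep_\<xi>: "\<And>j. j \<ge> 1 \<Longrightarrow> indep_set (sets (\<F> (j - 1))) {\<xi> j -` A \<inter> space M | A. A \<in> sets P}"
begin

lemma measurable_\<F>_mono:
  assumes "i \<le> j" "f \<in> measurable (\<F> i) N"
  shows "f \<in> measurable (\<F> j) N"
proof -
  have "sets (\<F> i) \<subseteq> sets (\<F> j)"
    using \<open>i \<le> j\<close> by (induction j rule: dec_induct) (use sets_\<F>_Suc in auto)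
  then have "subalgebra (\<F> j) (\<F> i)"
    using subalgebra_\<F> by (auto simp: subalgebra_def)
  then show ?thesis
    using assms(2) by (rule measurable_from_subalg)
qed

lemma measurable_\<F>_ident: "i \<le> j \<Longrightarrow> (\<lambda>x. x) \<in> measurable (\<F> j) (\<F> i)"
  using measurable_\<F>_mono[OF _ measurable_ident_sets[OF refl]] .

lemma measurable_\<F>_M: "f \<in> measurable (\<F> i) N \<Longrightarrow> f \<in> measurable M N"
  using subalgebra_\<F> by (rule measurable_from_subalg)

lemma borel_measurable_partial_sum:
  fixes D :: "'a \<Rightarrow> 'b \<Rightarrow> real"
  assumes D: "(\<lambda>(\<omega>, s). D \<omega> s) \<in> borel_measurable (\<F> 0 \<Otimes>\<^sub>M P)" and "i \<le> k"
  shows "(\<lambda>\<omega>. \<Sum>j=1..i. D \<omega> (\<xi> j \<omega>)) \<in> borel_measurable (\<F> k)"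
proof (rule borel_measurable_sum)
  fix j
  assume "j \<in> {1..i}"
  then have "(\<lambda>\<omega>. (\<omega>, \<xi> j \<omega>)) \<in> measurable (\<F> k) (\<F> 0 \<Otimes>\<^sub>M P)"
    using \<open>i \<le> k\<close> measurable_\<F>_mono[OF _ measurable_\<xi>] measurable_\<F>_ident
    by (intro measurable_Pair) auto
  from measurable_compose[OF this D] show "(\<lambda>\<omega>. D \<omega> (\<xi> j \<omega>)) \<in> borel_measurable (\<F> k)"
    by simp
qed

lemma measurable_pair_\<F>_mono:
  assumes "i \<le> j" "f \<in> measurable (\<F> i \<Otimes>\<^sub>M P) N"
  shows "f \<in> measurable (\<F> j \<Otimes>\<^sub>M P) N"
proof -
  have "(\<lambda>p. (fst p, snd p)) \<in> measurable (\<F> j \<Otimes>\<^sub>M P) (\<F> i \<Otimes>\<^sub>M P)"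
    using measurable_compose[OF measurable_fst measurable_\<F>_ident[OF \<open>i \<le> j\<close>]] by (intro measurable_Pair) auto
  from measurable_compose[OF this assms(2)] show ?thesis
    by simp
qed

lemma nn_integral_\<xi>_Suc:
  assumes "h \<in> borel_measurable (\<F> k \<Otimes>\<^sub>M P)"
  shows "(\<integral>\<^sup>+\<omega>. h (\<omega>, \<xi> (Suc k) \<omega>) \<partial>M) = (\<integral>\<^sup>+\<omega>. (\<integral>\<^sup>+s. h (\<omega>, s) \<partial>P) \<partial>M)"
proof (rule nn_integral_indep_freeze[OF prob_space_axioms P.prob_space_axioms subalgebra_\<F> _ _ _ assms])
  show "\<xi> (Suc k) \<in> measurable M P" "distr M P (\<xi> (Suc k)) = P"
    "indep_set (sets (\<F> k)) {\<xi> (Suc k) -` A \<inter> space M | A. A \<in> sets P}"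
    using measurable_\<F>_M[OF measurable_\<xi>] distr_\<xi> indep_\<xi>[of "Suc k"] by auto
qed

text \<open>The exponential supermartingale: conditioning on \<open>\<F> k\<close>, the factor contributed by the
  fresh sample \<open>\<xi> (k + 1)\<close> is integrated out by the freezing lemma and absorbed by the
  moment generating function bound \<open>exp (\<psi> \<omega>)\<close>.\<close>
lemma nn_integral_exp_partial_sum_le:
  fixes D :: "'a \<Rightarrow> 'b \<Rightarrow> real" and \<theta> \<psi> :: "'a \<Rightarrow> real" and W :: "'a \<Rightarrow> ennreal"
  assumes D: "(\<lambda>(\<omega>, s). D \<omega> s) \<in> borel_measurable (\<F> 0 \<Otimes>\<^sub>M P)"
    and \<theta>: "\<theta> \<in> borel_measurable (\<F> 0)" and \<psi>: "\<psi> \<in> borel_measurable (\<F> 0)"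
    and W: "W \<in> borel_measurable (\<F> 0)"
    and mgf: "\<And>\<omega>. \<omega> \<in> space M \<Longrightarrow> (\<integral>\<^sup>+s. exp (\<theta> \<omega> * D \<omega> s) \<partial>P) \<le> exp (\<psi> \<omega>)"
  shows "(\<integral>\<^sup>+\<omega>. W \<omega> * exp (\<theta> \<omega> * (\<Sum>j=1..k. D \<omega> (\<xi> j \<omega>)) - real k * \<psi> \<omega>) \<partial>M) \<le> (\<integral>\<^sup>+\<omega>. W \<omega> \<partial>M)"
proof (induction k)
  case (Suc k)
  define H where "H \<omega> = W \<omega> * exp (\<theta> \<omega> * (\<Sum>j=1..k. D \<omega> (\<xi> j \<omega>)) - real (Suc k) * \<psi> \<omega>)" for \<omega>
  have [measurable]: "W \<in> borel_measurable (\<F> k)" "\<theta> \<in> borel_measurable (\<F> k)" "\<psi> \<in> borel_measurable (\<F> k)"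
    "(\<lambda>\<omega>. \<Sum>j=1..k. D \<omega> (\<xi> j \<omega>)) \<in> borel_measurable (\<F> k)"
    using measurable_\<F>_mono[of 0 k] W \<theta> \<psi> borel_measurable_partial_sum[OF D] by auto
  have [measurable]: "(\<lambda>p. D (fst p) (snd p)) \<in> borel_measurable (\<F> k \<Otimes>\<^sub>M P)"
    using measurable_pair_\<F>_mono[OF _ D, of k] by (simp add: case_prod_unfold)
  have "exp (\<theta> \<omega> * (\<Sum>j=1..Suc k. D \<omega> (\<xi> j \<omega>)) - real (Suc k) * \<psi> \<omega>)
      = exp (\<theta> \<omega> * (\<Sum>j=1..k. D \<omega> (\<xi> j \<omega>)) - real (Suc k) * \<psi> \<omega>) * exp (\<theta> \<omega> * D \<omega> (\<xi> (Suc k) \<omega>))"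
    for \<omega>
    by (simp add: algebra_simps flip: exp_add)
  then have "(\<integral>\<^sup>+\<omega>. W \<omega> * exp (\<theta> \<omega> * (\<Sum>j=1..Suc k. D \<omega> (\<xi> j \<omega>)) - real (Suc k) * \<psi> \<omega>) \<partial>M)
      = (\<integral>\<^sup>+\<omega>. H \<omega> * exp (\<theta> \<omega> * D \<omega> (\<xi> (Suc k) \<omega>)) \<partial>M)"
    by (simp add: H_def ennreal_mult mult.assoc)
  also have "\<dots> = (\<integral>\<^sup>+\<omega>. (\<integral>\<^sup>+s. H \<omega> * exp (\<theta> \<omega> * D \<omega> s) \<partial>P) \<partial>M)"
  proof -
    have "(\<lambda>p. H (fst p) * exp (\<theta> (fst p) * D (fst p) (snd p))) \<in> borel_measurable (\<F> k \<Otimes>\<^sub>M P)"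
      unfolding H_def by measurable
    from nn_integral_\<xi>_Suc[OF this] show ?thesis
      by simp
  qed
  also have "\<dots> = (\<integral>\<^sup>+\<omega>. H \<omega> * (\<integral>\<^sup>+s. exp (\<theta> \<omega> * D \<omega> s) \<partial>P) \<partial>M)"
  proof (rule nn_integral_cong)
    fix \<omega>
    assume "\<omega> \<in> space M"
    then have "D \<omega> \<in> borel_measurable P"
      using measurable_Pair2[OF D, of \<omega>] subalgebra_\<F>[of 0] by (simp add: subalgebra_def)
    then show "(\<integral>\<^sup>+s. H \<omega> * exp (\<theta> \<omega> * D \<omega> s) \<partial>P) = H \<omega> * (\<integral>\<^sup>+s. exp (\<theta> \<omega> * D \<omega> s) \<partial>P)"
      by (intro nn_integral_cmult) measurable
  qed
  also have "\<dots> \<le> (\<integral>\<^sup>+\<omega>. H \<omega> * exp (\<psi> \<omega>) \<partial>M)"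
    by (intro nn_integral_mono mult_left_mono mgf) auto
  also have "\<dots> = (\<integral>\<^sup>+\<omega>. W \<omega> * exp (\<theta> \<omega> * (\<Sum>j=1..k. D \<omega> (\<xi> j \<omega>)) - real k * \<psi> \<omega>) \<partial>M)"
    by (simp add: H_def mult.assoc algebra_simps flip: ennreal_mult exp_add)
  also have "\<dots> \<le> (\<integral>\<^sup>+\<omega>. W \<omega> \<partial>M)"
    by (rule Suc.IH)
  finally show ?case .
qed simp

lemma borel_measurable_partial_sum_M:
  fixes D :: "'a \<Rightarrow> 'b \<Rightarrow> real"
  assumes "(\<lambda>(\<omega>, s). D \<omega> s) \<in> borel_measurable (\<F> 0 \<Otimes>\<^sub>M P)"
  shows "(\<lambda>\<omega>. \<Sum>j=1..k. D \<omega> (\<xi> j \<omega>)) \<in> borel_measurable M"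
  using borel_measurable_partial_sum[OF assms order_refl] by (rule measurable_\<F>_M)

lemma measure_partial_sum_ge_Int_le:
  fixes D :: "'a \<Rightarrow> 'b \<Rightarrow> real" and \<theta> \<psi> :: "'a \<Rightarrow> real" and t :: real
  assumes D: "(\<lambda>(\<omega>, s). D \<omega> s) \<in> borel_measurable (\<F> 0 \<Otimes>\<^sub>M P)"
    and \<theta>: "\<theta> \<in> borel_measurable (\<F> 0)" "\<And>\<omega>. \<omega> \<in> space M \<Longrightarrow> 0 \<le> \<theta> \<omega>"
    and \<psi>: "\<psi> \<in> borel_measurable (\<F> 0)"
    and mgf: "\<And>\<omega>. \<omega> \<in> space M \<Longrightarrow> (\<integral>\<^sup>+s. exp (\<theta> \<omega> * D \<omega> s) \<partial>P) \<le> exp (\<psi> \<omega>)"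
    and int: "integrable M (\<lambda>\<omega>. exp (real k * \<psi> \<omega> - \<theta> \<omega> * t))"
    and B: "B \<in> sets (\<F> 0)"
  shows "measure M ({\<omega> \<in> space M. t \<le> (\<Sum>j=1..k. D \<omega> (\<xi> j \<omega>))} \<inter> B)
    \<le> (\<integral>\<omega>. indicator B \<omega> * exp (real k * \<psi> \<omega> - \<theta> \<omega> * t) \<partial>M)"
proof -
  define S where "S \<omega> = (\<Sum>j=1..k. D \<omega> (\<xi> j \<omega>))" for \<omega>
  define g where "g \<omega> = exp (real k * \<psi> \<omega> - \<theta> \<omega> * t)" for \<omega>
  define A where "A = {\<omega> \<in> space M. t \<le> S \<omega>}"
  have [measurable]: "S \<in> borel_measurable M"
    unfolding S_def[abs_def] using D by (rule borel_measurable_partial_sum_M)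
  have [measurable]: "B \<in> sets M"
    using B subalgebra_\<F> by (auto simp: subalgebra_def)
  have pointwise: "indicator (A \<inter> B) \<omega> \<le> ennreal (indicator B \<omega> * g \<omega>) * exp (\<theta> \<omega> * S \<omega> - real k * \<psi> \<omega>)"
    if "\<omega> \<in> space M" for \<omega>
  proof (cases "\<omega> \<in> A \<inter> B")
    case True
    then have "1 \<le> exp (\<theta> \<omega> * (S \<omega> - t))"
      using \<theta>(2)[OF that] by (simp add: A_def)
    also have "\<dots> = g \<omega> * exp (\<theta> \<omega> * S \<omega> - real k * \<psi> \<omega>)"
      by (simp add: g_def algebra_simps flip: exp_add)
    finally have "ennreal 1 \<le> ennreal (g \<omega> * exp (\<theta> \<omega> * S \<omega> - real k * \<psi> \<omega>))"
      by (rule ennreal_leI)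
    then show ?thesis
      using True by (simp add: g_def ennreal_mult)
  qed simp
  have "emeasure M (A \<inter> B) = (\<integral>\<^sup>+\<omega>. indicator (A \<inter> B) \<omega> \<partial>M)"
    unfolding A_def by simp
  also have "\<dots> \<le> (\<integral>\<^sup>+\<omega>. ennreal (indicator B \<omega> * g \<omega>) * exp (\<theta> \<omega> * S \<omega> - real k * \<psi> \<omega>) \<partial>M)"
    using pointwise by (rule nn_integral_mono)
  also have "\<dots> \<le> (\<integral>\<^sup>+\<omega>. ennreal (indicator B \<omega> * g \<omega>) \<partial>M)"
    unfolding S_def using B \<theta>(1) \<psi>
    by (intro nn_integral_exp_partial_sum_le[OF D \<theta>(1) \<psi> _ mgf]) (auto simp: g_def)
  also have "\<dots> = ennreal (\<integral>\<omega>. indicator B \<omega> * g \<omega> \<partial>M)"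
    using integrable_mult_indicator[OF \<open>B \<in> sets M\<close> int]
    by (intro nn_integral_eq_integral) (auto simp: g_def)
  finally show ?thesis
    by (simp add: emeasure_eq_measure g_def ennreal_le_iff A_def S_def)
qed

lemma AE_real_cond_exp_partial_sum_ge_le:
  fixes D :: "'a \<Rightarrow> 'b \<Rightarrow> real" and \<theta> \<psi> :: "'a \<Rightarrow> real" and t :: real
  assumes D: "(\<lambda>(\<omega>, s). D \<omega> s) \<in> borel_measurable (\<F> 0 \<Otimes>\<^sub>M P)"
    and \<theta>: "\<theta> \<in> borel_measurable (\<F> 0)" "\<And>\<omega>. \<omega> \<in> space M \<Longrightarrow> 0 \<le> \<theta> \<omega>"
    and \<psi>: "\<psi> \<in> borel_measurable (\<F> 0)"
    and mgf: "\<And>\<omega>. \<omega> \<in> space M \<Longrightarrow> (\<integral>\<^sup>+s. exp (\<theta> \<omega> * D \<omega> s) \<partial>P) \<le> exp (\<psi> \<omega>)"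
    and int: "integrable M (\<lambda>\<omega>. exp (real k * \<psi> \<omega> - \<theta> \<omega> * t))"
  shows "AE \<omega> in M. real_cond_exp M (\<F> 0) (indicator {\<omega> \<in> space M. t \<le> (\<Sum>j=1..k. D \<omega> (\<xi> j \<omega>))}) \<omega>
    \<le> exp (real k * \<psi> \<omega> - \<theta> \<omega> * t)"
proof -
  interpret \<F>0: sigma_finite_subalgebra M "\<F> 0"
    using subalgebra_\<F> finite_measure_axioms
    by (intro finite_measure_subalgebra_is_sigma_finite)
      (simp add: finite_measure_subalgebra_def finite_measure_subalgebra_axioms_def)
  have [measurable]: "(\<lambda>\<omega>. \<Sum>j=1..k. D \<omega> (\<xi> j \<omega>)) \<in> borel_measurable M"
    using D by (rule borel_measurable_partial_sum_M)
  note [measurable] = \<theta>(1) \<psi>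
  show ?thesis
  proof (rule \<F>0.AE_real_cond_exp_indicator_le)
    show "{\<omega> \<in> space M. t \<le> (\<Sum>j=1..k. D \<omega> (\<xi> j \<omega>))} \<in> sets M"
      by measurable
    then show "emeasure M {\<omega> \<in> space M. t \<le> (\<Sum>j=1..k. D \<omega> (\<xi> j \<omega>))} < \<infinity>"
      by (simp add: emeasure_eq_measure)
    show "(\<lambda>\<omega>. exp (real k * \<psi> \<omega> - \<theta> \<omega> * t)) \<in> borel_measurable (\<F> 0)"
      by measurable
  qed (rule int measure_partial_sum_ge_Int_le[OF D \<theta> \<psi> mgf int])+
qed

lemma AE_real_cond_exp_partial_sum_ge_le_Bernstein:
  fixes D :: "'a \<Rightarrow> 'b \<Rightarrow> real" and \<Delta> :: "'a \<Rightarrow> real" and \<sigma> c :: real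
  assumes D: "(\<lambda>(\<omega>, s). D \<omega> s) \<in> borel_measurable (\<F> 0 \<Otimes>\<^sub>M P)"
    and \<Delta>: "\<Delta> \<in> borel_measurable (\<F> 0)" "\<And>\<omega>. \<omega> \<in> space M \<Longrightarrow> 0 < \<Delta> \<omega>"
    and "0 < \<sigma>" "0 < c"
    and mgf: "\<And>\<omega> l. \<omega> \<in> space M \<Longrightarrow> 0 \<le> l \<Longrightarrow> l * \<Delta> \<omega> * \<sigma> < 1 \<Longrightarrow>
      (\<integral>\<^sup>+s. exp (l * D \<omega> s) \<partial>P) \<le> exp ((l * \<Delta> \<omega> * \<sigma>)\<^sup>2 / (2 * (1 - l * \<Delta> \<omega> * \<sigma>)))"
  shows "AE \<omega> in M. real_cond_exp M (\<F> 0) (indicator {\<omega> \<in> space M. real n * c \<le> (\<Sum>j=1..n. D \<omega> (\<xi> j \<omega>))}) \<omega>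
    \<le> exp (- (real n * c\<^sup>2) / (2 * (\<Delta> \<omega> * \<sigma> * c + (\<Delta> \<omega>)\<^sup>2 * \<sigma>\<^sup>2)))"
proof -
  define a where "a \<omega> = c / (\<Delta> \<omega> * \<sigma> + c)" for \<omega>
  define \<theta> where "\<theta> \<omega> = a \<omega> / (\<Delta> \<omega> * \<sigma>)" for \<omega>
  define \<psi> where "\<psi> \<omega> = (a \<omega>)\<^sup>2 / (2 * (1 - a \<omega>))" for \<omega>
  have \<Delta>\<sigma>_pos: "0 < \<Delta> \<omega> * \<sigma>" if "\<omega> \<in> space M" for \<omega>
    using \<Delta>(2)[OF that] \<open>0 < \<sigma>\<close> by simp
  have \<theta>_nonneg: "0 \<le> \<theta> \<omega>" if "\<omega> \<in> space M" for \<omega>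
    using \<Delta>\<sigma>_pos[OF that] \<open>0 < c\<close> by (simp add: \<theta>_def a_def)
  have a_eq: "\<theta> \<omega> * \<Delta> \<omega> * \<sigma> = a \<omega>" if "\<omega> \<in> space M" for \<omega>
    using \<Delta>(2)[OF that] \<open>0 < \<sigma>\<close> by (simp add: \<theta>_def)
  have a_less_1: "a \<omega> < 1" if "\<omega> \<in> space M" for \<omega>
    using \<Delta>\<sigma>_pos[OF that] \<open>0 < c\<close> by (simp add: a_def divide_less_eq)
  have exponent: "real n * \<psi> \<omega> - \<theta> \<omega> * (real n * c)
      = - (real n * c\<^sup>2) / (2 * (\<Delta> \<omega> * \<sigma> * c + (\<Delta> \<omega>)\<^sup>2 * \<sigma>\<^sup>2))" if "\<omega> \<in> space M" for \<omega>
    using Bernstein_exponent[OF \<Delta>\<sigma>_pos[OF that] \<open>0 < c\<close>, of n]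
    by (simp add: \<psi>_def \<theta>_def a_def power_mult_distrib)
  have exp_le_1: "exp (real n * \<psi> \<omega> - \<theta> \<omega> * (real n * c)) \<le> 1" if "\<omega> \<in> space M" for \<omega>
  proof -
    have "0 < \<Delta> \<omega> * \<sigma> * c + (\<Delta> \<omega> * \<sigma>)\<^sup>2"
      using \<Delta>(2)[OF that] \<open>0 < \<sigma>\<close> \<open>0 < c\<close> by (intro add_pos_pos mult_pos_pos zero_less_power)
    then show ?thesis
      by (simp add: exponent[OF that] power_mult_distrib)
  qed
  note [measurable] = \<Delta>(1)
  have \<theta>[measurable]: "\<theta> \<in> borel_measurable (\<F> 0)" and \<psi>[measurable]: "\<psi> \<in> borel_measurable (\<F> 0)"
    unfolding \<theta>_def \<psi>_def a_def by measurable
  have "AE \<omega> in M. real_cond_exp M (\<F> 0) (indicator {\<omega> \<in> space M. real n * c \<le> (\<Sum>j=1..n. D \<omega> (\<xi> j \<omega>))}) \<omega>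
      \<le> exp (real n * \<psi> \<omega> - \<theta> \<omega> * (real n * c))"
  proof (rule AE_real_cond_exp_partial_sum_ge_le[OF D \<theta> \<theta>_nonneg \<psi>])
    show "(\<integral>\<^sup>+s. exp (\<theta> \<omega> * D \<omega> s) \<partial>P) \<le> exp (\<psi> \<omega>)" if "\<omega> \<in> space M" for \<omega>
      using mgf[OF that \<theta>_nonneg[OF that]] a_eq[OF that] a_less_1[OF that] by (simp add: \<psi>_def)
    have "(\<lambda>\<omega>. exp (real n * \<psi> \<omega> - \<theta> \<omega> * (real n * c))) \<in> borel_measurable M"
      by (intro measurable_\<F>_M[of _ 0]) measurable
    with exp_le_1 show "integrable M (\<lambda>\<omega>. exp (real n * \<psi> \<omega> - \<theta> \<omega> * (real n * c)))"
      by (intro integrable_const_bound[where B=1] AE_I2) auto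
  qed
  with AE_space show ?thesis
    by eventually_elim (simp add: exponent)
qed

end

theorem lemma2:
  fixes M :: "'a measure" and P :: "'b measure"
    and F :: "'x::euclidean_space \<Rightarrow> 'b \<Rightarrow> real"
    and \<kappa>FL :: "'b \<Rightarrow> real" and \<kappa>Lg :: real
    and Fk :: "nat \<Rightarrow> 'a measure"
    and \<Delta> :: "'a \<Rightarrow> real" and X0 Xi :: "'a \<Rightarrow> 'x"
    and \<xi> :: "nat \<Rightarrow> 'a \<Rightarrow> 'b"
    and c :: real and n :: nat
  defines "f \<equiv> (\<lambda>x. \<integral>s. F x s \<partial>P)"
  assumes M: "prob_space M" and P: "prob_space P"
    and F_int: "\<And>x. integrable P (F x)"
    and \<kappa>FL_meas: "\<kappa>FL \<in> borel_measurable P"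
    and \<kappa>FL_nonneg: "\<And>s. s \<in> space P \<Longrightarrow> \<kappa>FL s \<ge> 0"
    and F_Lip: "\<And>x1 x2 s. s \<in> space P \<Longrightarrow> \<bar>F x1 s - F x2 s\<bar> \<le> \<kappa>FL s * norm (x1 - x2)"
    and \<kappa>_mom_int: "\<And>m::nat. m \<ge> 2 \<Longrightarrow> integrable P (\<lambda>s. \<kappa>FL s ^ m)"
    and \<kappa>_mom_bdd: "bdd_above ((\<lambda>m::nat. (\<integral>s. \<kappa>FL s ^ m \<partial>P) powr (1 / real m)) ` {2..})"
    and sub: "\<And>j. subalgebra M (Fk j)"
    and filt: "\<And>j. sets (Fk j) \<subseteq> sets (Fk (Suc j))"
    and \<Delta>_meas: "\<Delta> \<in> borel_measurable (Fk 0)"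
    and \<Delta>_pos: "\<And>\<omega>. \<omega> \<in> space M \<Longrightarrow> \<Delta> \<omega> > 0"
    and X0_meas: "X0 \<in> borel_measurable (Fk 0)"
    and Xi_meas: "Xi \<in> borel_measurable (Fk 0)"
    and X_dist: "\<And>\<omega>. \<omega> \<in> space M \<Longrightarrow> norm (X0 \<omega> - Xi \<omega>) \<le> \<Delta> \<omega>"
    and \<kappa>Lg_pos: "\<kappa>Lg > 0"
    and f_diff: "\<And>\<omega>. \<omega> \<in> space M \<Longrightarrow> \<bar>f (X0 \<omega>) - f (Xi \<omega>)\<bar> \<le> \<kappa>Lg * \<Delta> \<omega>"
    and \<xi>_meas: "\<And>j. j \<ge> 1 \<Longrightarrow> \<xi> j \<in> measurable (Fk j) P"
    and \<xi>_law: "\<And>j. j \<ge> 1 \<Longrightarrow> distr M P (\<xi> j) = P"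
    and \<xi>_indep: "\<And>j. j \<ge> 1 \<Longrightarrow>
        prob_space.indep_set M (sets (Fk (j - 1))) {\<xi> j -` A \<inter> space M | A. A \<in> sets P}"
    and c_pos: "c > 0"
  shows "AE \<omega> in M.
     real_cond_exp M (Fk 0)
       (indicator {\<omega>\<in>space M.
          (\<Sum>j=1..n. (F (X0 \<omega>) (\<xi> j \<omega>) - f (X0 \<omega>)) - (F (Xi \<omega>) (\<xi> j \<omega>) - f (Xi \<omega>)))
            \<ge> real n * c}) \<omega>
     \<le> exp (- (real n * c\<^sup>2) /
          (2 * (\<Delta> \<omega> * (\<kappa>Lg + kappa_Lm P \<kappa>FL) * c + (\<Delta> \<omega>)\<^sup>2 * (\<kappa>Lg + kappa_Lm P \<kappa>FL)\<^sup>2)))"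
proof -
  interpret sampling_filtration M P Fk \<xi>
    by (intro sampling_filtration.intro[OF M P] sampling_filtration_axioms.intro)
      (fact sub filt \<xi>_meas \<xi>_law \<xi>_indep)+
  define K where "K = kappa_Lm P \<kappa>FL"
  define D where "D \<omega> s = (F (X0 \<omega>) s - f (X0 \<omega>)) - (F (Xi \<omega>) s - f (Xi \<omega>))" for \<omega> s
  have "0 \<le> K"
    unfolding K_def using \<kappa>_mom_bdd by (rule kappa_Lm_nonneg)
  with \<kappa>Lg_pos have "0 < \<kappa>Lg + K"
    by simp
  have \<kappa>_int: "\<And>k. integrable P (\<lambda>s. \<kappa>FL s ^ k)"
    by (rule P.integrable_power_if_integrable_powers_ge_2[OF \<kappa>FL_meas \<kappa>_mom_int])
  have \<kappa>_le: "\<And>k. (\<integral>s. \<kappa>FL s ^ k \<partial>P) \<le> K ^ k"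
    unfolding K_def by (rule P.integral_power_le_kappa_Lm[OF \<kappa>FL_meas \<kappa>FL_nonneg \<kappa>_mom_int \<kappa>_mom_bdd])
  have "(\<lambda>(\<omega>, s). D \<omega> s) \<in> borel_measurable (Fk 0 \<Otimes>\<^sub>M P)"
    unfolding D_def f_def using F_int
    by (intro borel_measurable_centred_diff_Lipschitz_param[OF prob_space_imp_sigma_finite[OF P] _
          \<kappa>FL_meas \<kappa>FL_nonneg F_Lip X0_meas Xi_meas]) auto
  then have "AE \<omega> in M. real_cond_exp M (Fk 0) (indicator {\<omega> \<in> space M. real n * c \<le> (\<Sum>j=1..n. D \<omega> (\<xi> j \<omega>))}) \<omega>
      \<le> exp (- (real n * c\<^sup>2) / (2 * (\<Delta> \<omega> * (\<kappa>Lg + K) * c + (\<Delta> \<omega>)\<^sup>2 * (\<kappa>Lg + K)\<^sup>2)))"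
    using \<Delta>_meas \<Delta>_pos \<open>0 < \<kappa>Lg + K\<close> c_pos
  proof (rule AE_real_cond_exp_partial_sum_ge_le_Bernstein)
    fix \<omega> and l :: real
    assume \<omega>: "\<omega> \<in> space M" and l: "0 \<le> l" "l * \<Delta> \<omega> * (\<kappa>Lg + K) < 1"
    show "(\<integral>\<^sup>+s. exp (l * D \<omega> s) \<partial>P)
        \<le> exp ((l * \<Delta> \<omega> * (\<kappa>Lg + K))\<^sup>2 / (2 * (1 - l * \<Delta> \<omega> * (\<kappa>Lg + K))))"
      unfolding D_def f_def
      by (rule P.nn_integral_exp_Lipschitz_diff_le[where L=\<kappa>Lg and K=K and \<Delta>="\<Delta> \<omega>" and \<kappa>=\<kappa>FL])
        (fact F_int \<kappa>FL_nonneg F_Lip \<kappa>_int \<kappa>_le less_imp_le[OF \<kappa>Lg_pos] l X_dist[OF \<omega>]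
          f_diff[OF \<omega>, unfolded f_def] refl)+
  qed
  then show ?thesis
    by (simp add: D_def K_def)
qed

end
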